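(* Let $\zeta$ denote the $\mathbb P_0$-almost sure limit $\zeta=\lim_{t\to+\infty}-\frac1t\log L_t(\mathcal X^t)$ (the Neyman–Pearson error exponent of the probability of miss). Then $$\zeta\le\overline\zeta:=\sum_{i=1}^N\pi_i\frac{\beta_i^2}{2}.$$
   Context: Let $N\ge 2$, $V=\{1,\dots,N\}$, $P\in\mathbb R^{N\times N}$ row-stochastic, irreducible and aperiodic with stationary distribution $\pi>0$, and $\beta_1,\dots,\beta_N\in\mathbb R$. For $s^t\in V^t$, $P(s^t)=\pi_{s_1}\prod_{k=1}^{t-1}P_{s_ks_{k+1}}$, $\mathcal S^t=\{s^t:P(s^t)>0\}$. Hypotheses: under $\mathcal H_0$ (law $\mathbb P_0$) the $X_{i,k}$, $i\in V,k\ge1$, are i.i.d. $\mathcal N(0,1)$; under $\mathcal H_1$ (law $\mathbb P_1$) $(S_k)_{k\ge1}$ is a Markov chain with initial law $\pi$ and transition matrix $P$ and, conditionally on it, the $X_{i,k}$ are independent with $X_{i,k}\sim\mathcal N(\beta_i,1)$ if $S_k=i$ and $\mathcal N(0,1)$ otherwise. The likelihood ratio is $L_t(\mathcal X^t)=\sum_{s^t\in\mathcal S^t}P(s^t)\exp\big(\sum_{k=1}^t(\beta_{s_k}X_{s_k,k}-\beta_{s_k}^2/2)\big)$; under $\mathbb P_0$ the limit of $-\frac1t\log L_t$ exists almost surely and is a deterministic constant. *)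

theory Defs
  imports "HOL-Probability.Probability"
begin

text \<open>States are V = {1..N}; the transition matrix is P :: nat => nat => real,
  only its entries on V x V matter.\<close>

definition row_stochastic :: "nat \<Rightarrow> (nat \<Rightarrow> nat \<Rightarrow> real) \<Rightarrow> bool" where
  "row_stochastic N P \<longleftrightarrow>
     (\<forall>i\<in>{1..N}. \<forall>j\<in>{1..N}. P i j \<ge> 0) \<and> (\<forall>i\<in>{1..N}. (\<Sum>j=1..N. P i j) = 1)"

fun matpow :: "nat \<Rightarrow> (nat \<Rightarrow> nat \<Rightarrow> real) \<Rightarrow> nat \<Rightarrow> nat \<Rightarrow> nat \<Rightarrow> real" where
  "matpow N P 0 i j = (if i = j then 1 else 0)"
| "matpow N P (Suc n) i j = (\<Sum>l=1..N. matpow N P n i l * P l j)"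

definition irreducible_chain :: "nat \<Rightarrow> (nat \<Rightarrow> nat \<Rightarrow> real) \<Rightarrow> bool" where
  "irreducible_chain N P \<longleftrightarrow> (\<forall>i\<in>{1..N}. \<forall>j\<in>{1..N}. \<exists>n>0. matpow N P n i j > 0)"

definition period :: "nat \<Rightarrow> (nat \<Rightarrow> nat \<Rightarrow> real) \<Rightarrow> nat \<Rightarrow> nat" where
  "period N P i = Gcd {n. n \<ge> 1 \<and> matpow N P n i i > 0}"

definition aperiodic_chain :: "nat \<Rightarrow> (nat \<Rightarrow> nat \<Rightarrow> real) \<Rightarrow> bool" where
  "aperiodic_chain N P \<longleftrightarrow> (\<forall>i\<in>{1..N}. period N P i = 1)"

definition stationary_dist :: "nat \<Rightarrow> (nat \<Rightarrow> nat \<Rightarrow> real) \<Rightarrow> (nat \<Rightarrow> real) \<Rightarrow> bool" where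
  "stationary_dist N P \<pi> \<longleftrightarrow> (\<forall>i\<in>{1..N}. \<pi> i \<ge> 0) \<and> (\<Sum>i=1..N. \<pi> i) = 1 \<and>
     (\<forall>j\<in>{1..N}. (\<Sum>i=1..N. \<pi> i * P i j) = \<pi> j)"

definition path_prob :: "(nat \<Rightarrow> nat \<Rightarrow> real) \<Rightarrow> (nat \<Rightarrow> real) \<Rightarrow> nat \<Rightarrow> (nat \<Rightarrow> nat) \<Rightarrow> real" where
  "path_prob P \<pi> t s = \<pi> (s 1) * (\<Prod>k=1..t-1. P (s k) (s (Suc k)))"

definition paths :: "nat \<Rightarrow> (nat \<Rightarrow> nat \<Rightarrow> real) \<Rightarrow> (nat \<Rightarrow> real) \<Rightarrow> nat \<Rightarrow> (nat \<Rightarrow> nat) set" where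
  "paths N P \<pi> t = {s \<in> {1..t} \<rightarrow>\<^sub>E {1..N}. path_prob P \<pi> t s > 0}"

definition likelihood_ratio ::
  "nat \<Rightarrow> (nat \<Rightarrow> nat \<Rightarrow> real) \<Rightarrow> (nat \<Rightarrow> real) \<Rightarrow> (nat \<Rightarrow> real) \<Rightarrow> nat \<Rightarrow> (nat \<Rightarrow> nat \<Rightarrow> real) \<Rightarrow> real" where
  "likelihood_ratio N P \<pi> \<beta> t x =
     (\<Sum>s\<in>paths N P \<pi> t. path_prob P \<pi> t s *
        exp (\<Sum>k=1..t. \<beta> (s k) * x (s k) k - (\<beta> (s k))\<^sup>2 / 2))"

end

theory Submission
  imports Defs
begin

text \<open>Averaging over the paths of the stationary chain, Jensen's inequality gives
  \<open>ln L\<^sub>t \<ge> \<Sum>\<^sub>k \<Sum>\<^sub>i \<pi>\<^sub>i (\<beta>\<^sub>i X\<^sub>i\<^sub>,\<^sub>k - \<beta>\<^sub>i\<^sup>2/2)\<close>, because every one-dimensional marginal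
  of the chain is \<open>\<pi>\<close>. Hence \<open>-(1/t) ln L\<^sub>t \<le> \<zeta>\<^sub>0 - S\<^sub>t/t\<close> with \<open>\<zeta>\<^sub>0 = \<Sum>\<^sub>i \<pi>\<^sub>i \<beta>\<^sub>i\<^sup>2/2\<close>, where
  \<open>S\<^sub>t = \<Sum>\<^sub>k \<Sum>\<^sub>i \<pi>\<^sub>i \<beta>\<^sub>i X\<^sub>i\<^sub>,\<^sub>k\<close> is a centred Gaussian sum with \<open>E S\<^sub>t\<^sup>2 = t \<Sum>\<^sub>i (\<pi>\<^sub>i \<beta>\<^sub>i)\<^sup>2\<close>.
  By Chebyshev's inequality \<open>S\<^sub>t/t \<rightarrow> 0\<close> in probability, which rules out almost sure convergence
  of \<open>-(1/t) ln L\<^sub>t\<close> to any \<open>\<zeta> > \<zeta>\<^sub>0\<close>.\<close>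

lemma path_prob_fun_upd_Suc:
  assumes "t \<ge> 1"
  shows "path_prob P \<pi> (Suc t) (s(Suc t := j)) = path_prob P \<pi> t s * P (s t) j"
proof -
  have split: "{1..t} = insert t {1..t-1}" using assms by auto
  have "(\<Prod>k=1..t. P ((s(Suc t := j)) k) ((s(Suc t := j)) (Suc k)))
      = P (s t) j * (\<Prod>k=1..t-1. P ((s(Suc t := j)) k) ((s(Suc t := j)) (Suc k)))"
    by (subst split, subst prod.insert) auto
  also have "\<dots> = P (s t) j * (\<Prod>k=1..t-1. P (s k) (s (Suc k)))"
    by (intro arg_cong[where f = "(*) _"] prod.cong) auto
  finally show ?thesis using assms unfolding path_prob_def by (simp add: mult_ac)
qed

lemma sum_paths_Suc:
  assumes "t \<ge> 1"
  shows "(\<Sum>s\<in>{1..Suc t} \<rightarrow>\<^sub>E V. path_prob P \<pi> (Suc t) s * g s)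
       = (\<Sum>s\<in>{1..t} \<rightarrow>\<^sub>E V. \<Sum>j\<in>V. path_prob P \<pi> t s * P (s t) j * g (s(Suc t := j)))"
proof -
  have split: "{1..Suc t} = insert (Suc t) {1..t}" by auto
  have "(\<Sum>s\<in>{1..Suc t} \<rightarrow>\<^sub>E V. path_prob P \<pi> (Suc t) s * g s)
     = (\<Sum>(j, s)\<in>V \<times> ({1..t} \<rightarrow>\<^sub>E V). path_prob P \<pi> (Suc t) (s(Suc t := j)) * g (s(Suc t := j)))"
    unfolding split PiE_insert_eq by (subst sum.reindex[OF inj_combinator]) (auto simp: case_prod_beta)
  also have "\<dots> = (\<Sum>j\<in>V. \<Sum>s\<in>{1..t} \<rightarrow>\<^sub>E V. path_prob P \<pi> t s * P (s t) j * g (s(Suc t := j)))"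
    by (simp add: sum.cartesian_product path_prob_fun_upd_Suc[OF assms])
  finally show ?thesis by (simp add: sum.swap[of _ V])
qed

lemma path_prob_marginal_last:
  assumes st: "stationary_dist N P \<pi>"
  shows "(\<Sum>s\<in>{1..Suc n} \<rightarrow>\<^sub>E {1..N}. path_prob P \<pi> (Suc n) s * g (s (Suc n)))
        = (\<Sum>i=1..N. \<pi> i * g i)"
proof (induction n arbitrary: g)
  case 0
  have one: "{1..Suc 0} = insert 1 {}" by auto
  have paths1: "{1..Suc 0} \<rightarrow>\<^sub>E {1..N} = (\<lambda>i. (\<lambda>_. undefined)(1 := i)) ` {1..N}"
    unfolding one PiE_insert_eq PiE_empty_domain by auto
  have inj: "inj_on (\<lambda>i. (\<lambda>_. undefined)(1 := i)) {1..N}"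
    by (rule inj_onI) (metis fun_upd_same)
  show ?case unfolding paths1 by (subst sum.reindex[OF inj]) (auto simp: path_prob_def)
next
  case (Suc n)
  have "(\<Sum>s\<in>{1..Suc (Suc n)} \<rightarrow>\<^sub>E {1..N}. path_prob P \<pi> (Suc (Suc n)) s * g (s (Suc (Suc n))))
     = (\<Sum>s\<in>{1..Suc n} \<rightarrow>\<^sub>E {1..N}. path_prob P \<pi> (Suc n) s * (\<Sum>j=1..N. P (s (Suc n)) j * g j))"
    by (subst sum_paths_Suc) (auto simp: sum_distrib_left mult_ac)
  also have "\<dots> = (\<Sum>i=1..N. \<pi> i * (\<Sum>j=1..N. P i j * g j))" by (rule Suc.IH)
  also have "\<dots> = (\<Sum>j=1..N. (\<Sum>i=1..N. \<pi> i * P i j) * g j)"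
    by (simp add: sum_distrib_left sum_distrib_right mult_ac) (rule sum.swap)
  also have "\<dots> = (\<Sum>j=1..N. \<pi> j * g j)"
    using st unfolding stationary_dist_def by (intro sum.cong) auto
  finally show ?case .
qed

lemma path_prob_marginal:
  assumes st: "stationary_dist N P \<pi>" and rs: "row_stochastic N P" and "1 \<le> k" "k \<le> t"
  shows "(\<Sum>s\<in>{1..t} \<rightarrow>\<^sub>E {1..N}. path_prob P \<pi> t s * g (s k)) = (\<Sum>i=1..N. \<pi> i * g i)"
  using \<open>k \<le> t\<close>
proof (induction t rule: dec_induct)
  case base
  then show ?case using path_prob_marginal_last[OF st, of "k - 1" g] \<open>1 \<le> k\<close> by simp
next
  case (step n)
  have "(\<Sum>s\<in>{1..Suc n} \<rightarrow>\<^sub>E {1..N}. path_prob P \<pi> (Suc n) s * g (s k))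
     = (\<Sum>s\<in>{1..n} \<rightarrow>\<^sub>E {1..N}. path_prob P \<pi> n s * g (s k) * (\<Sum>j=1..N. P (s n) j))"
    using step \<open>1 \<le> k\<close> by (subst sum_paths_Suc) (auto simp: sum_distrib_left mult_ac)
  also have "\<dots> = (\<Sum>s\<in>{1..n} \<rightarrow>\<^sub>E {1..N}. path_prob P \<pi> n s * g (s k))"
    using rs step \<open>1 \<le> k\<close> unfolding row_stochastic_def
    by (intro sum.cong refl) (auto simp: PiE_iff)
  finally show ?case using step.IH by simp
qed

lemma path_prob_nonneg:
  assumes "row_stochastic N P" and "stationary_dist N P \<pi>" and "t \<ge> 1"
    and "s \<in> {1..t} \<rightarrow>\<^sub>E {1..N}"
  shows "path_prob P \<pi> t s \<ge> 0"
  using assms unfolding path_prob_def row_stochastic_def stationary_dist_def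
  by (intro mult_nonneg_nonneg prod_nonneg) (auto simp: PiE_iff)

lemma likelihood_ratio_eq_sum_PiE:
  assumes "row_stochastic N P" and "stationary_dist N P \<pi>" and "t \<ge> 1"
  shows "likelihood_ratio N P \<pi> \<beta> t x = (\<Sum>s\<in>{1..t} \<rightarrow>\<^sub>E {1..N}.
           path_prob P \<pi> t s * exp (\<Sum>k=1..t. \<beta> (s k) * x (s k) k - (\<beta> (s k))\<^sup>2 / 2))"
  unfolding likelihood_ratio_def
proof (rule sum.mono_neutral_left)
  show "paths N P \<pi> t \<subseteq> {1..t} \<rightarrow>\<^sub>E {1..N}" unfolding paths_def by auto
  show "\<forall>s\<in>({1..t} \<rightarrow>\<^sub>E {1..N}) - paths N P \<pi> t.
      path_prob P \<pi> t s * exp (\<Sum>k=1..t. \<beta> (s k) * x (s k) k - (\<beta> (s k))\<^sup>2 / 2) = 0"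
    using path_prob_nonneg[OF assms] unfolding paths_def by force
qed (simp add: finite_PiE)

lemma exp_stationary_mean_le_likelihood_ratio:
  assumes rs: "row_stochastic N P" and st: "stationary_dist N P \<pi>" and t: "t \<ge> 1"
  shows "exp (\<Sum>k=1..t. \<Sum>i=1..N. \<pi> i * (\<beta> i * x i k - (\<beta> i)\<^sup>2 / 2))
           \<le> likelihood_ratio N P \<pi> \<beta> t x"
proof -
  let ?A = "{1..t} \<rightarrow>\<^sub>E {1..N}"
  let ?a = "\<lambda>s. \<Sum>k=1..t. \<beta> (s k) * x (s k) k - (\<beta> (s k))\<^sup>2 / 2"
  have total: "(\<Sum>s\<in>?A. path_prob P \<pi> t s) = 1"
    using path_prob_marginal[OF st rs order.refl t, of "\<lambda>_. 1"] st
    unfolding stationary_dist_def by simp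
  then have "?A \<noteq> {}" by auto
  have "(\<Sum>s\<in>?A. path_prob P \<pi> t s * ?a s)
      = (\<Sum>k=1..t. \<Sum>s\<in>?A. path_prob P \<pi> t s * (\<lambda>i. \<beta> i * x i k - (\<beta> i)\<^sup>2 / 2) (s k))"
    by (simp only: sum_distrib_left) (rule sum.swap)
  also have "\<dots> = (\<Sum>k=1..t. \<Sum>i=1..N. \<pi> i * (\<beta> i * x i k - (\<beta> i)\<^sup>2 / 2))"
    by (intro sum.cong refl path_prob_marginal[OF st rs]) auto
  finally have "exp (\<Sum>k=1..t. \<Sum>i=1..N. \<pi> i * (\<beta> i * x i k - (\<beta> i)\<^sup>2 / 2))
      = exp (\<Sum>s\<in>?A. path_prob P \<pi> t s *\<^sub>R ?a s)" by simp
  also have "\<dots> \<le> (\<Sum>s\<in>?A. path_prob P \<pi> t s * exp (?a s))"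
    using \<open>?A \<noteq> {}\<close> total path_prob_nonneg[OF rs st t]
    by (intro convex_on_sum[OF _ _ exp_convex]) (auto simp: finite_PiE)
  finally show ?thesis using likelihood_ratio_eq_sum_PiE[OF rs st t] by simp
qed

lemma neg_ln_likelihood_ratio_le:
  assumes "row_stochastic N P" and "stationary_dist N P \<pi>" and "t \<ge> 1"
  shows "- (1 / real t) * ln (likelihood_ratio N P \<pi> \<beta> t x)
           \<le> (\<Sum>i=1..N. \<pi> i * (\<beta> i)\<^sup>2 / 2) - (\<Sum>k=1..t. \<Sum>i=1..N. \<pi> i * \<beta> i * x i k) / real t"
proof -
  let ?L = "likelihood_ratio N P \<pi> \<beta> t x"
  let ?S = "\<Sum>k=1..t. \<Sum>i=1..N. \<pi> i * \<beta> i * x i k"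
  let ?C = "\<Sum>i=1..N. \<pi> i * (\<beta> i)\<^sup>2 / 2"
  have "(\<Sum>k=1..t. \<Sum>i=1..N. \<pi> i * (\<beta> i * x i k - (\<beta> i)\<^sup>2 / 2)) = ?S - real t * ?C"
    by (simp add: right_diff_distrib sum_subtractf sum_distrib_left mult_ac)
  with exp_stationary_mean_le_likelihood_ratio[OF assms, of \<beta> x]
  have exp_le: "exp (?S - real t * ?C) \<le> ?L" by simp
  then have "?L > 0" using exp_gt_zero less_le_trans by blast
  with exp_le have "?S - real t * ?C \<le> ln ?L"
    using ln_le_cancel_iff[of "exp (?S - real t * ?C)" ?L] by simp
  then have "- (1 / real t) * ln ?L \<le> - (1 / real t) * (?S - real t * ?C)"
    by (intro mult_left_mono_neg) auto
  also have "\<dots> = ?C - ?S / real t" using \<open>t \<ge> 1\<close> by (simp add: field_simps)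
  finally show ?thesis .
qed

lemma eventually_linear_deviation:
  fixes F S :: "nat \<Rightarrow> real"
  assumes "F \<longlonglongrightarrow> \<zeta>" and "eventually (\<lambda>t. F t \<le> C - S t / real t) sequentially"
    and "C + \<epsilon> < \<zeta>"
  shows "eventually (\<lambda>t. \<epsilon> * real t \<le> \<bar>S t\<bar>) sequentially"
  using order_tendstoD(1)[OF assms(1,3)] assms(2) eventually_ge_at_top[of 1]
proof eventually_elim
  case (elim t)
  then have "(C + \<epsilon>) * real t < F t * real t" by (intro mult_strict_right_mono) auto
  moreover have "F t * real t \<le> C * real t - S t" using elim by (simp add: field_simps)
  ultimately show ?case by (simp add: algebra_simps)
qed

lemma eventually_linear_deviation_of_likelihood_ratio_limit:
  assumes "row_stochastic N P" and "stationary_dist N P \<pi>"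
    and "(\<lambda>t. - (1 / real t) * ln (likelihood_ratio N P \<pi> \<beta> t x)) \<longlonglongrightarrow> \<zeta>"
    and "(\<Sum>i=1..N. \<pi> i * (\<beta> i)\<^sup>2 / 2) + \<epsilon> < \<zeta>"
  shows "eventually (\<lambda>t. \<epsilon> * real t \<le> \<bar>\<Sum>k=1..t. \<Sum>i=1..N. \<pi> i * \<beta> i * x i k\<bar>) sequentially"
  using assms(3) _ assms(4)
proof (rule eventually_linear_deviation)
  show "eventually (\<lambda>t. - (1 / real t) * ln (likelihood_ratio N P \<pi> \<beta> t x)
      \<le> (\<Sum>i=1..N. \<pi> i * (\<beta> i)\<^sup>2 / 2) - (\<Sum>k=1..t. \<Sum>i=1..N. \<pi> i * \<beta> i * x i k) / real t)
      sequentially"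
    using eventually_ge_at_top[of 1]
    by eventually_elim (rule neg_ln_likelihood_ratio_le[OF assms(1,2)])
qed

context prob_space
begin

lemma std_normal_distributed_moments:
  assumes D: "distributed M lborel Y std_normal_density"
  shows "integrable M Y" "integrable M (\<lambda>\<omega>. Y \<omega> * Y \<omega>)"
    "expectation Y = 0" "expectation (\<lambda>\<omega>. Y \<omega> * Y \<omega>) = 1"
proof -
  show "integrable M Y"
    using distributed_integrable[OF D, of "\<lambda>x. x"] integrable_std_normal_moment[of 1] by simp
  show "integrable M (\<lambda>\<omega>. Y \<omega> * Y \<omega>)"
    using distributed_integrable[OF D, of "\<lambda>x. x * x"] integrable_std_normal_moment[of 2]
    by (simp add: power2_eq_square)
  show "expectation Y = 0" by (rule standard_normal_distributed_expectation[OF D])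
  have "expectation (\<lambda>\<omega>. Y \<omega> * Y \<omega>) = (\<integral>x. std_normal_density x * (x * x) \<partial>lborel)"
    using distributed_integral[OF D, of "\<lambda>x. x * x"] by simp
  also have "\<dots> = 1" using integral_std_normal_moment_even[of 1] by (simp add: power2_eq_square)
  finally show "expectation (\<lambda>\<omega>. Y \<omega> * Y \<omega>) = 1" .
qed

lemma indep_std_normal_product:
  assumes ind: "indep_vars (\<lambda>_. borel) Z J" and "p \<in> J" "q \<in> J"
    and D: "\<And>r. r \<in> J \<Longrightarrow> distributed M lborel (Z r) std_normal_density"
  shows "integrable M (\<lambda>\<omega>. Z p \<omega> * Z q \<omega>) \<and>
    expectation (\<lambda>\<omega>. Z p \<omega> * Z q \<omega>) = (if p = q then 1 else 0)"
proof (cases "p = q")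
  case True
  then show ?thesis using std_normal_distributed_moments[OF D[OF \<open>p \<in> J\<close>]] by simp
next
  case False
  have "indep_vars (\<lambda>_. borel) Z {p, q}"
    using indep_vars_subset[OF ind] \<open>p \<in> J\<close> \<open>q \<in> J\<close> by auto
  with False have iv: "indep_var borel (Z p) borel (Z q)"
    using indep_vars_sum[of "{q}" p] by simp
  show ?thesis
    using indep_var_lebesgue_integral[OF iv] indep_var_integrable[OF iv] False
      std_normal_distributed_moments[OF D[OF \<open>p \<in> J\<close>]]
      std_normal_distributed_moments[OF D[OF \<open>q \<in> J\<close>]]
    by simp
qed

lemma expectation_square_sum_indep_std_normal:
  assumes ind: "indep_vars (\<lambda>_. borel) Z J" and I: "finite I" "I \<subseteq> J"
    and D: "\<And>r. r \<in> J \<Longrightarrow> distributed M lborel (Z r) std_normal_density"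
  shows "integrable M (\<lambda>\<omega>. (\<Sum>p\<in>I. a p * Z p \<omega>)\<^sup>2)"
    "expectation (\<lambda>\<omega>. (\<Sum>p\<in>I. a p * Z p \<omega>)\<^sup>2) = (\<Sum>p\<in>I. (a p)\<^sup>2)"
proof -
  have square: "(\<lambda>\<omega>. (\<Sum>p\<in>I. a p * Z p \<omega>)\<^sup>2)
      = (\<lambda>\<omega>. \<Sum>p\<in>I. \<Sum>q\<in>I. a p * a q * (Z p \<omega> * Z q \<omega>))"
    by (simp add: power2_eq_square sum_product mult_ac)
  have prod: "integrable M (\<lambda>\<omega>. Z p \<omega> * Z q \<omega>) \<and>
      expectation (\<lambda>\<omega>. Z p \<omega> * Z q \<omega>) = (if p = q then 1 else 0)" if "p \<in> I" "q \<in> I" for p q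
    using indep_std_normal_product[OF ind _ _ D] that I by blast
  then show "integrable M (\<lambda>\<omega>. (\<Sum>p\<in>I. a p * Z p \<omega>)\<^sup>2)"
    unfolding square by (intro Bochner_Integration.integrable_sum integrable_mult_right) auto
  have "expectation (\<lambda>\<omega>. (\<Sum>p\<in>I. a p * Z p \<omega>)\<^sup>2)
      = (\<Sum>p\<in>I. \<Sum>q\<in>I. a p * a q * (if p = q then 1 else 0))"
    unfolding square using prod by (simp add: Bochner_Integration.integral_sum)
  also have "\<dots> = (\<Sum>p\<in>I. (a p)\<^sup>2)"
    using I by (simp add: power2_eq_square if_distrib sum.delta cong: if_cong)
  finally show "expectation (\<lambda>\<omega>. (\<Sum>p\<in>I. a p * Z p \<omega>)\<^sup>2) = (\<Sum>p\<in>I. (a p)\<^sup>2)" .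
qed

lemma prob_tendsto_one_if_AE_eventually:
  assumes sets: "\<And>t. A t \<in> sets M"
    and AE: "AE \<omega> in M. eventually (\<lambda>t. \<omega> \<in> A t) sequentially"
  shows "(\<lambda>t. prob (A t)) \<longlonglongrightarrow> 1"
proof (rule tendsto_sandwich)
  define E where "E n = (\<Inter>t\<in>{n..}. A t)" for n
  have E_sets: "range E \<subseteq> sets M"
    unfolding E_def using sets by (auto intro!: sets.countable_INT')
  have "incseq E" unfolding E_def by (rule incseq_SucI) auto
  moreover have "prob (\<Union>n. E n) = 1"
  proof (subst prob_eq_1)
    show "(\<Union>n. E n) \<in> sets M" using E_sets by auto
    show "AE \<omega> in M. \<omega> \<in> (\<Union>n. E n)"
      using AE by eventually_elim (auto simp: E_def eventually_sequentially)
  qed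
  ultimately show "(\<lambda>n. prob (E n)) \<longlonglongrightarrow> 1"
    using finite_Lim_measure_incseq[OF E_sets] by simp
  show "eventually (\<lambda>n. prob (E n) \<le> prob (A n)) sequentially"
    using E_sets sets by (intro always_eventually allI finite_measure_mono) (auto simp: E_def)
  show "eventually (\<lambda>n. prob (A n) \<le> 1) sequentially" by simp
qed simp

lemma prob_linear_deviation_tendsto_zero:
  assumes int: "\<And>t. integrable M (\<lambda>\<omega>. (S t \<omega>)\<^sup>2)"
    and second_moment: "\<And>t. expectation (\<lambda>\<omega>. (S t \<omega>)\<^sup>2) = real t * K"
    and "\<epsilon> > 0"
  shows "(\<lambda>t. prob {\<omega> \<in> space M. \<epsilon> * real t \<le> \<bar>S t \<omega>\<bar>}) \<longlonglongrightarrow> 0"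
proof (rule tendsto_sandwich)
  show "eventually (\<lambda>t. 0 \<le> prob {\<omega> \<in> space M. \<epsilon> * real t \<le> \<bar>S t \<omega>\<bar>}) sequentially"
    by simp
  show "eventually (\<lambda>t. prob {\<omega> \<in> space M. \<epsilon> * real t \<le> \<bar>S t \<omega>\<bar>}
      \<le> K / \<epsilon>\<^sup>2 * inverse (real t)) sequentially"
    using eventually_ge_at_top[of 1]
  proof eventually_elim
    case (elim t)
    then have "(\<epsilon> * real t)\<^sup>2 > 0" using \<open>\<epsilon> > 0\<close> by simp
    have "{\<omega> \<in> space M. \<epsilon> * real t \<le> \<bar>S t \<omega>\<bar>} = {\<omega> \<in> space M. (\<epsilon> * real t)\<^sup>2 \<le> (S t \<omega>)\<^sup>2}"
      using \<open>\<epsilon> > 0\<close> by (auto simp flip: abs_le_square_iff)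
    then have "prob {\<omega> \<in> space M. \<epsilon> * real t \<le> \<bar>S t \<omega>\<bar>}
        \<le> expectation (\<lambda>\<omega>. (S t \<omega>)\<^sup>2) / (\<epsilon> * real t)\<^sup>2"
      using int \<open>(\<epsilon> * real t)\<^sup>2 > 0\<close>
      by (simp add: integral_Markov_inequality_measure[where A = "space M"])
    also have "\<dots> = K / \<epsilon>\<^sup>2 * inverse (real t)"
      using second_moment elim \<open>\<epsilon> > 0\<close> by (simp add: field_simps power2_eq_square)
    finally show ?case .
  qed
  show "(\<lambda>t. K / \<epsilon>\<^sup>2 * inverse (real t)) \<longlonglongrightarrow> 0"
    by (intro tendsto_mult_right_zero lim_inverse_n)
qed simp

lemma expectation_square_weighted_sum_std_normal_array:
  fixes X :: "nat \<Rightarrow> nat \<Rightarrow> 'a \<Rightarrow> real"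
  assumes ind: "indep_vars (\<lambda>_. borel) (\<lambda>(i, k). X i k) ({1..N} \<times> {1..})"
    and D: "\<forall>i\<in>{1..N}. \<forall>k\<ge>1. distributed M lborel (X i k) std_normal_density"
  shows "integrable M (\<lambda>\<omega>. (\<Sum>k=1..t. \<Sum>i=1..N. c i * X i k \<omega>)\<^sup>2)"
    "expectation (\<lambda>\<omega>. (\<Sum>k=1..t. \<Sum>i=1..N. c i * X i k \<omega>)\<^sup>2) = real t * (\<Sum>i=1..N. (c i)\<^sup>2)"
proof -
  let ?Z = "\<lambda>(i, k). X i k"
  have D': "distributed M lborel (?Z p) std_normal_density" if "p \<in> {1..N} \<times> {1..}" for p
    using D that by auto
  have sub: "{1..N} \<times> {1..t} \<subseteq> {1..N} \<times> {1..}" by auto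
  have sum_eq: "(\<Sum>k=1..t. \<Sum>i=1..N. c i * X i k \<omega>) = (\<Sum>p\<in>{1..N} \<times> {1..t}. c (fst p) * ?Z p \<omega>)"
    for \<omega> by (subst sum.swap) (simp add: sum.cartesian_product case_prod_beta)
  have "(\<Sum>p\<in>{1..N} \<times> {1..t}. (c (fst p))\<^sup>2) = (\<Sum>i=1..N. \<Sum>k=1..t. (c i)\<^sup>2)"
    by (simp only: sum.cartesian_product) (intro sum.cong refl, auto)
  also have "\<dots> = real t * (\<Sum>i=1..N. (c i)\<^sup>2)" by (simp add: sum_distrib_left)
  finally show "integrable M (\<lambda>\<omega>. (\<Sum>k=1..t. \<Sum>i=1..N. c i * X i k \<omega>)\<^sup>2)"
    "expectation (\<lambda>\<omega>. (\<Sum>k=1..t. \<Sum>i=1..N. c i * X i k \<omega>)\<^sup>2) = real t * (\<Sum>i=1..N. (c i)\<^sup>2)"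
    unfolding sum_eq
    using expectation_square_sum_indep_std_normal[OF ind _ sub D', of "\<lambda>p. c (fst p)"]
    by simp_all
qed

end

theorem proposition1:
  fixes N :: nat and P :: "nat \<Rightarrow> nat \<Rightarrow> real" and \<pi> \<beta> :: "nat \<Rightarrow> real"
    and M :: "'w measure" and X :: "nat \<Rightarrow> nat \<Rightarrow> 'w \<Rightarrow> real" and \<zeta> :: real
  assumes "N \<ge> 2"
    and "row_stochastic N P" and "irreducible_chain N P" and "aperiodic_chain N P"
    and "stationary_dist N P \<pi>" and "\<forall>i\<in>{1..N}. \<pi> i > 0"
    and "prob_space M"
    and "prob_space.indep_vars M (\<lambda>_. borel) (\<lambda>(i, k). X i k) ({1..N} \<times> {1..})"
    and "\<forall>i\<in>{1..N}. \<forall>k\<ge>1. distributed M lborel (X i k) std_normal_density"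
    and "AE \<omega> in M. (\<lambda>t. - (1 / real t) * ln (likelihood_ratio N P \<pi> \<beta> t (\<lambda>i k. X i k \<omega>)))
                       \<longlonglongrightarrow> \<zeta>"
  shows "\<zeta> \<le> (\<Sum>i=1..N. \<pi> i * (\<beta> i)\<^sup>2 / 2)"
proof (rule ccontr)
  let ?C = "\<Sum>i=1..N. \<pi> i * (\<beta> i)\<^sup>2 / 2"
  interpret prob_space M by fact
  assume "\<not> \<zeta> \<le> ?C"
  define \<epsilon> where "\<epsilon> = (\<zeta> - ?C) / 2"
  have "\<epsilon> > 0" and margin: "?C + \<epsilon> < \<zeta>"
    using \<open>\<not> \<zeta> \<le> ?C\<close> by (simp_all add: \<epsilon>_def field_simps)
  define S where "S t \<omega> = (\<Sum>k=1..t. \<Sum>i=1..N. \<pi> i * \<beta> i * X i k \<omega>)" for t \<omega>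
  have S_measurable: "S t \<in> borel_measurable M" for t
    using assms(9) distributed_measurable unfolding S_def by (fastforce intro!: borel_measurable_sum)
  define A where "A t = {\<omega> \<in> space M. \<epsilon> * real t \<le> \<bar>S t \<omega>\<bar>}" for t
  have "AE \<omega> in M. eventually (\<lambda>t. \<epsilon> * real t \<le> \<bar>S t \<omega>\<bar>) sequentially"
    using assms(10) unfolding S_def
    by eventually_elim (rule eventually_linear_deviation_of_likelihood_ratio_limit[OF assms(2,5) _ margin])
  then have "AE \<omega> in M. eventually (\<lambda>t. \<omega> \<in> A t) sequentially"
    using AE_space by eventually_elim (simp add: A_def)
  with S_measurable have "(\<lambda>t. prob (A t)) \<longlonglongrightarrow> 1"
    by (intro prob_tendsto_one_if_AE_eventually) (auto simp: A_def)
  moreover have "(\<lambda>t. prob (A t)) \<longlonglongrightarrow> 0"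
    unfolding A_def
  proof (rule prob_linear_deviation_tendsto_zero[OF _ _ \<open>\<epsilon> > 0\<close>])
    note moments = expectation_square_weighted_sum_std_normal_array[OF assms(8,9),
        where c = "\<lambda>i. \<pi> i * \<beta> i"]
    show "integrable M (\<lambda>\<omega>. (S t \<omega>)\<^sup>2)" for t
      unfolding S_def by (rule moments(1))
    show "expectation (\<lambda>\<omega>. (S t \<omega>)\<^sup>2) = real t * (\<Sum>i=1..N. (\<pi> i * \<beta> i)\<^sup>2)" for t
      unfolding S_def by (rule moments(2))
  qed
  ultimately show False using LIMSEQ_unique by fastforce
qed

end
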